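(* Let $R\ge 1$. For all $m\ge\mathrm{poly}(d)$, with probability at least $1-\exp(-\Omega(m^{1/3}))$ over the random initialization $a^{(0)},W^{(0)},b^{(0)}$, the following holds simultaneously for all $W\in\mathbb{R}^{d\times m}$ with $\|W-W^{(0)}\|_{2,\infty}\le R/m^{2/3}$: $$\sup_{x\in\mathcal{X}}|f_W(x)-g_W(x)|\le O\Big(\frac{R^2}{m^{1/6}}\Big).$$
   Context: $\mathcal{X}:=\{x\in\mathbb{R}^d:\|x\|_2=1,\ x_d=1/2\}$. $\sigma(z)=\max\{z,0\}$. For $W\in\mathbb{R}^{d\times m}$ with columns $W_r$: $f_W(x)=\sum_{r=1}^m a_r^{(0)}\sigma(\langle W_r,x\rangle+b_r^{(0)})$ and the pseudo-network $g_W(x)=\sum_{r=1}^m a_r^{(0)}\langle W_r-W_r^{(0)},x\rangle\,\mathbf{1}\{\langle W_r^{(0)},x\rangle+b_r^{(0)}\ge0\}$. Initialization: entries of $W^{(0)}$ and $b^{(0)}$ i.i.d. $\mathcal{N}(0,1/m)$; entries of $a^{(0)}$ i.i.d. uniform on $\{-m^{-1/3},+m^{-1/3}\}$; all independent. $\|W\|_{2,\infty}=\max_r\|W_r\|_2$ (maximum column $\ell_2$ norm). *)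

theory Defs
  imports "HOL-Probability.Probability"
begin

text \<open>Vectors in R^d are represented as functions nat => real, only the
coordinates i < d matter. A matrix W in R^{d x m} is represented by its columns:
W r is the r-th column (r < m), W r i its i-th entry (i < d).\<close>

definition inner_d :: "nat \<Rightarrow> (nat \<Rightarrow> real) \<Rightarrow> (nat \<Rightarrow> real) \<Rightarrow> real" where
  "inner_d d u v = (\<Sum>i<d. u i * v i)"

definition norm_d :: "nat \<Rightarrow> (nat \<Rightarrow> real) \<Rightarrow> real" where
  "norm_d d u = sqrt (\<Sum>i<d. (u i)\<^sup>2)"

text \<open>The input domain X = {x in R^d : ||x||_2 = 1, x_d = 1/2} (x_d is the last coordinate,
index d-1 with 0-based indexing).\<close>
definition Xset :: "nat \<Rightarrow> (nat \<Rightarrow> real) set" where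
  "Xset d = {x. norm_d d x = 1 \<and> x (d - 1) = 1/2 \<and> (\<forall>i\<ge>d. x i = 0)}"

definition relu :: "real \<Rightarrow> real" where
  "relu z = max z 0"

definition fnet :: "nat \<Rightarrow> nat \<Rightarrow> (nat \<Rightarrow> real) \<Rightarrow> (nat \<Rightarrow> real) \<Rightarrow>
    (nat \<Rightarrow> nat \<Rightarrow> real) \<Rightarrow> (nat \<Rightarrow> real) \<Rightarrow> real" where
  "fnet m d a b W x = (\<Sum>r<m. a r * relu (inner_d d (W r) x + b r))"

definition gnet :: "nat \<Rightarrow> nat \<Rightarrow> (nat \<Rightarrow> real) \<Rightarrow> (nat \<Rightarrow> real) \<Rightarrow>
    (nat \<Rightarrow> nat \<Rightarrow> real) \<Rightarrow> (nat \<Rightarrow> nat \<Rightarrow> real) \<Rightarrow> (nat \<Rightarrow> real) \<Rightarrow> real" where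
  "gnet m d a b W0 W x =
     (\<Sum>r<m. a r * inner_d d (\<lambda>i. W r i - W0 r i) x *
              (if inner_d d (W0 r) x + b r \<ge> 0 then 1 else 0))"

text \<open>||V||_{2,infty} = max column l2 norm, for m >= 1 columns.\<close>
definition norm_2inf :: "nat \<Rightarrow> nat \<Rightarrow> (nat \<Rightarrow> nat \<Rightarrow> real) \<Rightarrow> real" where
  "norm_2inf m d V = Max ((\<lambda>r. norm_d d (V r)) ` {..<m})"

definition gauss_m :: "nat \<Rightarrow> real measure" where
  "gauss_m m = density lborel (normal_density 0 (sqrt (1 / real m)))"

definition sign_m :: "nat \<Rightarrow> real measure" where
  "sign_m m = measure_pmf (pmf_of_set {- (real m powr (-1/3)), real m powr (-1/3)})"

definition init_measure :: "nat \<Rightarrow> nat \<Rightarrow>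
    ((nat \<Rightarrow> real) \<times> (nat \<Rightarrow> nat \<Rightarrow> real) \<times> (nat \<Rightarrow> real)) measure" where
  "init_measure m d =
     (PiM {..<m} (\<lambda>_. sign_m m)) \<Otimes>\<^sub>M
     ((PiM {..<m} (\<lambda>_. PiM {..<d} (\<lambda>_. gauss_m m))) \<Otimes>\<^sub>M
      (PiM {..<m} (\<lambda>_. gauss_m m)))"

end

theory Submission
  imports Defs
begin

(*
  Fix a point x of the domain and a point y of a grid of mesh 1/(dm) with |x - y| small, and
  write U_r, V_r for the initial preactivations of neuron r at x and y and
  D_r = <W_r - W0_r, x>, so that |D_r| <= rho = R m^(-2/3) and |U_r - V_r| <= 1/m. Then
    f_W(x) - g_W(x) = f_W0(y) + sum_r a_r (relu (U_r + D_r) - D_r [U_r >= 0] - relu V_r),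
  and each summand is at most m^(-1/3) (1/m + rho [|V_r| <= 2 rho]); hence
    |f_W(x) - g_W(x)| <= |f_W0(y)| + m^(-1/3) + m^(-1/3) rho N(y),
  where N(y) counts the neurons whose preactivation at y lies within 2 rho of the kink.
  Both random quantities are sums of i.i.d. terms over the neurons and are controlled by
  Chernoff bounds: |f_W0(y)| < 10 m^(-1/6), because cosh (c relu u) <= cosh (c u) reduces its
  moment generating function to that of a Gaussian, and N(y) < 5 R m^(5/6), because a Gaussian
  bias falls into an interval of length 4 rho with probability at most 2 rho sqrt m. A union
  bound over the grid, which has (2dm + 1)^d points, and over the events |W0_ri| >= 1 leaves a
  failure probability below exp (- m^(1/3)) once m >= d^12.
*)

lemma product_prob_space_of_prob_space: "(\<And>i. prob_space (M i)) \<Longrightarrow> product_prob_space M"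
  by (simp add: product_prob_space_def product_prob_space_axioms_def product_sigma_finite_def
      prob_space_imp_sigma_finite)

lemma nn_integral_pair_PiM_prod:
  fixes M :: "'i \<Rightarrow> 'a measure" and N :: "'i \<Rightarrow> 'b measure"
  assumes I: "finite I" and M: "\<And>i. prob_space (M i)" and N: "\<And>i. prob_space (N i)"
    and f: "\<And>i. i \<in> I \<Longrightarrow> (\<lambda>(x, y). f i x y) \<in> borel_measurable (M i \<Otimes>\<^sub>M N i)"
  shows "(\<integral>\<^sup>+p. (\<Prod>i\<in>I. f i (fst p i) (snd p i)) \<partial>(PiM I M \<Otimes>\<^sub>M PiM I N))
    = (\<Prod>i\<in>I. \<integral>\<^sup>+x. \<integral>\<^sup>+y. f i x y \<partial>N i \<partial>M i)"
proof -
  interpret M: product_prob_space M by (rule product_prob_space_of_prob_space[OF M])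
  interpret N: product_prob_space N by (rule product_prob_space_of_prob_space[OF N])
  have sf_N: "sigma_finite_measure (PiM I N)"
    using N by (simp add: prob_space_imp_sigma_finite prob_space_PiM)
  have f_fst: "(\<lambda>p. f i (fst p i) (snd p i)) \<in> borel_measurable (PiM I M \<Otimes>\<^sub>M PiM I N)" if "i \<in> I" for i
  proof -
    have "(\<lambda>p. (fst p i, snd p i)) \<in> measurable (PiM I M \<Otimes>\<^sub>M PiM I N) (M i \<Otimes>\<^sub>M N i)"
      using that by measurable
    from measurable_compose[OF this f[OF that]] show ?thesis by simp
  qed
  have "(\<integral>\<^sup>+p. (\<Prod>i\<in>I. f i (fst p i) (snd p i)) \<partial>(PiM I M \<Otimes>\<^sub>M PiM I N))
      = (\<integral>\<^sup>+x. \<integral>\<^sup>+y. (\<Prod>i\<in>I. f i (x i) (y i)) \<partial>PiM I N \<partial>PiM I M)"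
  proof -
    have "(\<lambda>p. \<Prod>i\<in>I. f i (fst p i) (snd p i)) \<in> borel_measurable (PiM I M \<Otimes>\<^sub>M PiM I N)"
      using f_fst by (rule borel_measurable_prod_ennreal)
    from sigma_finite_measure.nn_integral_fst[OF sf_N this] show ?thesis by simp
  qed
  also have "\<dots> = (\<integral>\<^sup>+x. (\<Prod>i\<in>I. \<integral>\<^sup>+y. f i (x i) y \<partial>N i) \<partial>PiM I M)"
  proof (intro nn_integral_cong N.product_nn_integral_prod[OF I])
    fix x i assume "x \<in> space (PiM I M)" "i \<in> I"
    then have "x i \<in> space (M i)" by (auto simp: space_PiM)
    from measurable_Pair2[OF f[OF \<open>i \<in> I\<close>] this] show "f i (x i) \<in> borel_measurable (N i)" by simp
  qed
  also have "\<dots> = (\<Prod>i\<in>I. \<integral>\<^sup>+x. \<integral>\<^sup>+y. f i x y \<partial>N i \<partial>M i)"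
    using I f by (intro M.product_nn_integral_prod)
       (auto intro: sigma_finite_measure.borel_measurable_nn_integral_fst prob_space_imp_sigma_finite N)
  finally show ?thesis .
qed

text \<open>Coordinates outside the index set of a product are the constant \<^const>\<open>undefined\<close>,
  so every coordinate is measurable; this lets \<open>measurable\<close> handle sums over \<open>i < d\<close>.\<close>
lemma borel_measurable_component_PiM:
  assumes "\<And>j. j \<in> I \<Longrightarrow> (\<lambda>x. x) \<in> borel_measurable (M j)"
  shows "(\<lambda>x. x i) \<in> borel_measurable (PiM I M)"
proof (cases "i \<in> I")
  case True
  then show ?thesis
    using measurable_component_singleton[of i I M] by (intro measurable_compose[OF _ assms])
next
  case False
  have "(\<lambda>x. undefined) \<in> borel_measurable (PiM I M)" by simp
  then show ?thesis
    by (rule measurable_cong[THEN iffD1, rotated])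
       (use False in \<open>auto simp: space_PiM PiE_def extensional_def\<close>)
qed

lemma emeasure_le_nn_integral:
  assumes "A \<in> sets M" "\<And>x. x \<in> A \<Longrightarrow> 1 \<le> f x"
  shows "emeasure M A \<le> (\<integral>\<^sup>+x. f x \<partial>M)"
proof -
  have "emeasure M A = (\<integral>\<^sup>+x. indicator A x \<partial>M)" using assms(1) by simp
  also have "\<dots> \<le> (\<integral>\<^sup>+x. f x \<partial>M)"
    by (intro nn_integral_mono) (auto simp: indicator_def intro: assms(2))
  finally show ?thesis .
qed

lemma measure_UNION_le_card:
  assumes "finite I" "\<And>i. i \<in> I \<Longrightarrow> F i \<in> sets M" "\<And>i. i \<in> I \<Longrightarrow> measure M (F i) \<le> b"
  shows "measure M (\<Union>i\<in>I. F i) \<le> real (card I) * b"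
proof -
  have "measure M (\<Union>i\<in>I. F i) \<le> (\<Sum>i\<in>I. measure M (F i))"
    by (rule measure_UNION_le[OF assms(1,2)])
  also have "\<dots> \<le> real (card I) * b"
    by (rule sum_bounded_above) (rule assms(3))
  finally show ?thesis .
qed

lemma measure_abs_ge_le:
  assumes "X \<in> borel_measurable M" "0 \<le> b"
    and tail: "\<And>\<sigma> :: real. \<sigma>\<^sup>2 = 1 \<Longrightarrow> emeasure M {x \<in> space M. t \<le> \<sigma> * X x} \<le> ennreal b"
  shows "measure M {x \<in> space M. t \<le> \<bar>X x\<bar>} \<le> 2 * b"
proof -
  define A where "A \<sigma> = {x \<in> space M. t \<le> \<sigma> * X x}" for \<sigma> :: real
  have "{x \<in> space M. t \<le> \<bar>X x\<bar>} = A 1 \<union> A (-1)"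
    by (auto simp: A_def)
  moreover have "A \<sigma> \<in> sets M" for \<sigma>
    unfolding A_def using assms(1) by measurable
  moreover have "measure M (A \<sigma>) \<le> b" if "\<sigma>\<^sup>2 = 1" for \<sigma> :: real
    using tail[OF that] \<open>0 \<le> b\<close> by (simp add: A_def measure_def enn2real_leI)
  then have "measure M (A 1) \<le> b" "measure M (A (-1)) \<le> b"
    by simp_all
  ultimately show ?thesis
    using measure_Un_le[of "A 1" M "A (-1)"] by simp
qed

lemma ennreal_half_add_self [simp]: "(x + x) / 2 = (x :: ennreal)"
  by (simp add: mult_2_right[symmetric] ennreal_mult_divide_eq mult.commute)

lemma power_le_exp_mult: "0 \<le> x \<Longrightarrow> x ^ n \<le> exp (real n * x)"
  using power_mono[of x "exp x" n] exp_ge_add_one_self[of x] by (simp add: exp_of_nat_mult)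

lemma powr_twelfths:
  fixes x :: real
  assumes "0 < x"
  shows "x = (x powr (1/12)) ^ 12" "x powr (1/6) = (x powr (1/12)) ^ 2"
    "x powr (1/3) = (x powr (1/12)) ^ 4" "x powr (2/3) = (x powr (1/12)) ^ 8"
    "x powr (5/6) = (x powr (1/12)) ^ 10" "sqrt x = (x powr (1/12)) ^ 6"
    "x powr (-1/3) = 1 / (x powr (1/12)) ^ 4"
  using assms
  by (simp_all add: powr_realpow[symmetric] powr_powr powr_half_sqrt[symmetric] powr_minus_divide)

lemma real_card_lessThan_filter:
  fixes m :: nat
  shows "real (card {r. r < m \<and> P r}) = (\<Sum>r<m. if P r then 1 else 0)"
proof -
  have "{r. r < m \<and> P r} = {r \<in> {..<m}. P r}"
    by auto
  then show ?thesis
    using sum.inter_filter[OF finite_lessThan[of m], where g = "\<lambda>_. 1 :: real" and P = P]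
    by simp
qed

section \<open>Gaussian integrals\<close>

lemma normal_density_mult_exp:
  assumes "0 < \<sigma>"
  shows "normal_density 0 \<sigma> x * exp (c * x) = exp (c\<^sup>2 * \<sigma>\<^sup>2 / 2) * normal_density (c * \<sigma>\<^sup>2) \<sigma> x"
proof -
  have "- (x - 0)\<^sup>2 / (2 * \<sigma>\<^sup>2) + c * x = c\<^sup>2 * \<sigma>\<^sup>2 / 2 + (- (x - c * \<sigma>\<^sup>2)\<^sup>2 / (2 * \<sigma>\<^sup>2))"
    using assms by (simp add: field_simps power2_eq_square)
  then show ?thesis
    unfolding normal_density_def by (simp add: mult_exp_exp)
qed

lemma nn_integral_exp_normal:
  assumes "0 < \<sigma>"
  shows "(\<integral>\<^sup>+x. ennreal (exp (c * x)) \<partial>density lborel (normal_density 0 \<sigma>))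
    = ennreal (exp (c\<^sup>2 * \<sigma>\<^sup>2 / 2))"
proof -
  have "(\<integral>\<^sup>+x. ennreal (exp (c * x)) \<partial>density lborel (normal_density 0 \<sigma>))
      = (\<integral>\<^sup>+x. ennreal (exp (c\<^sup>2 * \<sigma>\<^sup>2 / 2)) * ennreal (normal_density (c * \<sigma>\<^sup>2) \<sigma> x) \<partial>lborel)"
    by (subst nn_integral_density)
       (auto intro!: nn_integral_cong simp: ennreal_mult'[symmetric] normal_density_mult_exp[OF assms])
  also have "\<dots> = ennreal (exp (c\<^sup>2 * \<sigma>\<^sup>2 / 2))"
    using assms by (subst nn_integral_cmult) (auto simp: nn_integral_eq_integral)
  finally show ?thesis .
qed

lemma emeasure_normal_interval_le:
  assumes "0 < \<sigma>" "a \<le> b"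
  shows "emeasure (density lborel (normal_density 0 \<sigma>)) {a..b} \<le> ennreal ((b - a) / (\<sigma> * sqrt (2 * pi)))"
proof -
  have sup: "normal_density 0 \<sigma> x \<le> 1 / (\<sigma> * sqrt (2 * pi))" for x
  proof -
    have "normal_density 0 \<sigma> x \<le> 1 / sqrt (2 * pi * \<sigma>\<^sup>2)"
      unfolding normal_density_def by (simp, intro divide_right_mono) auto
    also have "sqrt (2 * pi * \<sigma>\<^sup>2) = \<sigma> * sqrt (2 * pi)"
      using assms by (simp add: real_sqrt_mult)
    finally show ?thesis .
  qed
  have "emeasure (density lborel (normal_density 0 \<sigma>)) {a..b}
      = (\<integral>\<^sup>+x. ennreal (normal_density 0 \<sigma> x) * indicator {a..b} x \<partial>lborel)"
    by (subst emeasure_density) auto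
  also have "\<dots> \<le> (\<integral>\<^sup>+x. ennreal (1 / (\<sigma> * sqrt (2 * pi))) * indicator {a..b} x \<partial>lborel)"
    using sup by (intro nn_integral_mono) (auto simp: indicator_def intro: ennreal_leI)
  also have "\<dots> = ennreal ((b - a) / (\<sigma> * sqrt (2 * pi)))"
    using assms by (subst nn_integral_cmult) (auto simp: ennreal_mult'[symmetric])
  finally show ?thesis .
qed

lemma sets_gauss_m [measurable_cong, simp]: "sets (gauss_m m) = sets borel"
  unfolding gauss_m_def by simp

lemma space_gauss_m [simp]: "space (gauss_m m) = UNIV"
  unfolding gauss_m_def by simp

lemma measurable_gauss_m_iff: "f \<in> measurable (gauss_m m) N \<longleftrightarrow> f \<in> measurable borel N"
  using measurable_cong_sets[of "gauss_m m" borel N N] by simp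

lemma prob_space_gauss_m: "0 < m \<Longrightarrow> prob_space (gauss_m m)"
  unfolding gauss_m_def by (rule prob_space_normal_density) simp

lemma emeasure_gauss_m_UNIV: "0 < m \<Longrightarrow> emeasure (gauss_m m) UNIV = 1"
  using prob_space.emeasure_space_1[OF prob_space_gauss_m] by simp

lemma nn_integral_exp_gauss_m:
  assumes "0 < m"
  shows "(\<integral>\<^sup>+x. ennreal (exp (c * x)) \<partial>gauss_m m) = ennreal (exp (c\<^sup>2 / (2 * m)))"
  using nn_integral_exp_normal[of "sqrt (1 / real m)" c] assms by (simp add: gauss_m_def)

lemma emeasure_gauss_m_interval_le:
  assumes "0 < m" "a \<le> b"
  shows "emeasure (gauss_m m) {a..b} \<le> ennreal ((b - a) * sqrt m / 2)"
proof -
  have "(b - a) / (sqrt (1 / real m) * sqrt (2 * pi)) = (b - a) * sqrt m / sqrt (2 * pi)"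
    using assms by (simp add: real_sqrt_divide field_simps)
  also have "\<dots> \<le> (b - a) * sqrt m / 2"
    using assms pi_gt3 by (intro divide_left_mono) (auto simp: real_le_rsqrt)
  finally show ?thesis
    using emeasure_normal_interval_le[of "sqrt (1 / real m)" a b] assms
    by (auto simp: gauss_m_def intro: order_trans ennreal_leI)
qed

abbreviation gauss_vec :: "nat \<Rightarrow> nat \<Rightarrow> (nat \<Rightarrow> real) measure" where
  "gauss_vec m d \<equiv> PiM {..<d} (\<lambda>_. gauss_m m)"

lemma prob_space_gauss_vec: "0 < m \<Longrightarrow> prob_space (gauss_vec m d)"
  by (intro prob_space_PiM prob_space_gauss_m)

lemma borel_measurable_gauss_vec_component [measurable]:
  "(\<lambda>w. w i) \<in> borel_measurable (gauss_vec m d)"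
  by (rule borel_measurable_component_PiM) (simp cong: measurable_cong_sets)

lemma nn_integral_exp_sum_gauss_vec:
  assumes "0 < m"
  shows "(\<integral>\<^sup>+w. ennreal (exp (\<Sum>i<d. c i * w i)) \<partial>gauss_vec m d)
    = ennreal (exp ((\<Sum>i<d. (c i)\<^sup>2) / (2 * m)))"
proof -
  interpret product_prob_space "\<lambda>_::nat. gauss_m m"
    by (rule product_prob_space_of_prob_space) (rule prob_space_gauss_m[OF assms])
  have "(\<integral>\<^sup>+w. ennreal (exp (\<Sum>i<d. c i * w i)) \<partial>gauss_vec m d)
      = (\<integral>\<^sup>+w. (\<Prod>i<d. ennreal (exp (c i * w i))) \<partial>gauss_vec m d)"
    by (simp add: exp_sum prod_ennreal)
  also have "\<dots> = (\<Prod>i<d. \<integral>\<^sup>+x. ennreal (exp (c i * x)) \<partial>gauss_m m)"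
    by (rule product_nn_integral_prod) (auto simp: measurable_gauss_m_iff)
  also have "\<dots> = ennreal (exp ((\<Sum>i<d. (c i)\<^sup>2) / (2 * m)))"
    by (simp add: nn_integral_exp_gauss_m[OF assms] prod_ennreal exp_sum[symmetric] sum_divide_distrib)
  finally show ?thesis .
qed

lemma nn_integral_exp_component_gauss_vec:
  assumes "0 < m" "i < d"
  shows "(\<integral>\<^sup>+w. ennreal (exp (c * w i)) \<partial>gauss_vec m d) = ennreal (exp (c\<^sup>2 / (2 * m)))"
proof -
  have "(if j = i then c else 0) * w j = (if j = i then c * w j else 0)" for j and w :: "nat \<Rightarrow> real"
    by simp
  moreover have "(if j = i then c else 0)\<^sup>2 = (if j = i then c\<^sup>2 else 0)" for j
    by simp
  ultimately show ?thesis
    using nn_integral_exp_sum_gauss_vec[OF assms(1), of d "\<lambda>j. if j = i then c else 0"] assms(2)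
    by simp
qed

section \<open>The initialization measure\<close>

lemma sets_sign_m [measurable_cong, simp]: "sets (sign_m m) = sets (count_space UNIV)"
  unfolding sign_m_def by simp

lemma space_sign_m [simp]: "space (sign_m m) = UNIV"
  unfolding sign_m_def by simp

lemma measurable_sign_m_iff [simp]: "f \<in> measurable (sign_m m) N \<longleftrightarrow> f \<in> UNIV \<rightarrow> space N"
  unfolding sign_m_def by simp

lemma prob_space_sign_m: "prob_space (sign_m m)"
  unfolding sign_m_def by (rule prob_space_measure_pmf)

lemma nn_integral_sign_m:
  assumes "0 < m"
  shows "(\<integral>\<^sup>+\<alpha>. f \<alpha> \<partial>sign_m m) = (f (real m powr (-1/3)) + f (- (real m powr (-1/3)))) / 2"
proof -
  have "- (real m powr (-1/3)) \<noteq> real m powr (-1/3)" using assms by simp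
  then show ?thesis
    unfolding sign_m_def by (subst nn_integral_pmf_of_set) (auto simp: add.commute)
qed

lemma prob_space_init_measure: "0 < m \<Longrightarrow> prob_space (init_measure m d)"
  unfolding init_measure_def
  by (intro prob_space_pair prob_space_PiM prob_space_sign_m prob_space_gauss_m) auto

lemma measurable_neuron:
  assumes "r < m"
  shows "(\<lambda>\<omega>. (fst \<omega> r, fst (snd \<omega>) r, snd (snd \<omega>) r))
    \<in> measurable (init_measure m d) (borel \<Otimes>\<^sub>M (gauss_vec m d \<Otimes>\<^sub>M borel))"
proof -
  have "(\<lambda>a. a r) \<in> borel_measurable (PiM {..<m} (\<lambda>_. sign_m m))"
    using assms by (intro measurable_compose[OF measurable_component_singleton]) auto
  moreover have "(\<lambda>W. W r) \<in> measurable (PiM {..<m} (\<lambda>_. gauss_vec m d)) (gauss_vec m d)"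
    using assms by simp
  moreover have "(\<lambda>b. b r) \<in> borel_measurable (PiM {..<m} (\<lambda>_. gauss_m m))"
    using assms by measurable
  ultimately show ?thesis
    unfolding init_measure_def by measurable
qed

lemma borel_measurable_init_sign [measurable]:
  "(\<lambda>\<omega>. fst \<omega> r) \<in> borel_measurable (init_measure m d)"
proof -
  have "(\<lambda>a. a r) \<in> borel_measurable (PiM {..<m} (\<lambda>_. sign_m m))"
    by (rule borel_measurable_component_PiM) simp
  then show ?thesis unfolding init_measure_def by measurable
qed

lemma borel_measurable_init_bias [measurable]:
  "(\<lambda>\<omega>. snd (snd \<omega>) r) \<in> borel_measurable (init_measure m d)"
proof -
  have "(\<lambda>b. b r) \<in> borel_measurable (PiM {..<m} (\<lambda>_. gauss_m m))"
    by (rule borel_measurable_component_PiM) (simp cong: measurable_cong_sets)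
  then show ?thesis unfolding init_measure_def by measurable
qed

lemma borel_measurable_init_weight [measurable]:
  "(\<lambda>\<omega>. fst (snd \<omega>) r i) \<in> borel_measurable (init_measure m d)"
proof -
  have "(\<lambda>W. W r i) \<in> borel_measurable (PiM {..<m} (\<lambda>_. gauss_vec m d))"
  proof (cases "r < m")
    case True
    then show ?thesis
      using measurable_component_singleton[of r "{..<m}" "\<lambda>_. gauss_vec m d"]
      by (intro measurable_compose[OF _ borel_measurable_gauss_vec_component[of i d m]]) auto
  next
    case False
    have "(\<lambda>W. undefined i) \<in> borel_measurable (PiM {..<m} (\<lambda>_. gauss_vec m d))" by simp
    then show ?thesis
      by (rule measurable_cong[THEN iffD1, rotated])
         (use False in \<open>auto simp: space_PiM PiE_def extensional_def\<close>)
  qed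
  then show ?thesis unfolding init_measure_def by measurable
qed

lemma borel_measurable_relu [measurable]: "relu \<in> borel_measurable borel"
  unfolding relu_def by measurable

lemma borel_measurable_init_fnet [measurable]:
  "(\<lambda>\<omega>. fnet m d (fst \<omega>) (snd (snd \<omega>)) (fst (snd \<omega>)) y) \<in> borel_measurable (init_measure m d)"
  unfolding fnet_def inner_d_def by measurable

definition neuron_nn_integral ::
    "nat \<Rightarrow> nat \<Rightarrow> (real \<Rightarrow> (nat \<Rightarrow> real) \<Rightarrow> real \<Rightarrow> ennreal) \<Rightarrow> ennreal" where
  "neuron_nn_integral m d F =
     (\<integral>\<^sup>+w. \<integral>\<^sup>+\<beta>. (F (real m powr (-1/3)) w \<beta> + F (- (real m powr (-1/3))) w \<beta>) / 2
        \<partial>gauss_m m \<partial>gauss_vec m d)"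

lemma nn_integral_init_measure_prod:
  assumes m: "0 < m"
    and F: "\<And>r. r < m \<Longrightarrow> (\<lambda>(\<alpha>, w, \<beta>). F r \<alpha> w \<beta>) \<in> borel_measurable (borel \<Otimes>\<^sub>M (gauss_vec m d \<Otimes>\<^sub>M borel))"
  shows "(\<integral>\<^sup>+\<omega>. (\<Prod>r<m. F r (fst \<omega> r) (fst (snd \<omega>) r) (snd (snd \<omega>) r)) \<partial>init_measure m d)
    = (\<Prod>r<m. neuron_nn_integral m d (F r))"
proof -
  define H where "H r w \<beta> = (F r (real m powr (-1/3)) w \<beta> + F r (- (real m powr (-1/3))) w \<beta>) / 2"
    for r w \<beta>
  define WB where "WB = PiM {..<m} (\<lambda>_. gauss_vec m d) \<Otimes>\<^sub>M PiM {..<m} (\<lambda>_. gauss_m m)"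
  interpret signs: product_prob_space "\<lambda>_::nat. sign_m m"
    by (rule product_prob_space_of_prob_space) (rule prob_space_sign_m)
  have "prob_space (PiM {..<m} (\<lambda>_. sign_m m))" "prob_space WB"
    unfolding WB_def
    by (intro prob_space_PiM prob_space_pair prob_space_sign_m prob_space_gauss_vec[OF m]
        prob_space_gauss_m[OF m])+
  then interpret pair_sigma_finite "PiM {..<m} (\<lambda>_. sign_m m)" WB
    by (simp add: pair_sigma_finite_def prob_space_imp_sigma_finite)
  have "(\<integral>\<^sup>+\<omega>. (\<Prod>r<m. F r (fst \<omega> r) (fst (snd \<omega>) r) (snd (snd \<omega>) r)) \<partial>init_measure m d)
      = (\<integral>\<^sup>+p. (\<integral>\<^sup>+a. (\<Prod>r<m. F r (a r) (fst p r) (snd p r)) \<partial>PiM {..<m} (\<lambda>_. sign_m m)) \<partial>WB)"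
  proof -
    have "(\<lambda>\<omega>. \<Prod>r<m. F r (fst \<omega> r) (fst (snd \<omega>) r) (snd (snd \<omega>) r)) \<in> borel_measurable (init_measure m d)"
      using measurable_compose[OF measurable_neuron F] by (intro borel_measurable_prod_ennreal) auto
    from nn_integral_snd[OF this[unfolded init_measure_def WB_def[symmetric]]]
    show ?thesis unfolding init_measure_def WB_def[symmetric] by simp
  qed
  also have "\<dots> = (\<integral>\<^sup>+p. (\<Prod>r<m. H r (fst p r) (snd p r)) \<partial>WB)"
    unfolding H_def
    by (intro nn_integral_cong, subst signs.product_nn_integral_prod) (auto simp: nn_integral_sign_m[OF m])
  also have "\<dots> = (\<Prod>r<m. neuron_nn_integral m d (F r))"
    unfolding WB_def neuron_nn_integral_def H_def[symmetric]
  proof (rule nn_integral_pair_PiM_prod)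
    fix r assume "r \<in> {..<m}"
    then have "r < m" by simp
    have "(\<lambda>p. (\<lambda>(\<alpha>, w, \<beta>). F r \<alpha> w \<beta>) (c, fst p, snd p)) \<in> borel_measurable (gauss_vec m d \<Otimes>\<^sub>M gauss_m m)"
      for c
      by (rule measurable_compose[OF _ F[OF \<open>r < m\<close>]]) measurable
    then show "(\<lambda>(w, \<beta>). H r w \<beta>) \<in> borel_measurable (gauss_vec m d \<Otimes>\<^sub>M gauss_m m)"
      unfolding H_def by (simp add: split_beta')
  qed (simp_all add: prob_space_gauss_vec[OF m] prob_space_gauss_m[OF m])
  finally show ?thesis .
qed

lemma neuron_nn_integral_const:
  assumes "0 < m"
  shows "neuron_nn_integral m d (\<lambda>_ _ _. c) = c"
proof -
  interpret gauss_vec: prob_space "gauss_vec m d" by (rule prob_space_gauss_vec[OF assms])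
  show ?thesis
    unfolding neuron_nn_integral_def
    by (simp add: emeasure_gauss_m_UNIV[OF assms] gauss_vec.emeasure_space_1)
qed

lemma nn_integral_init_measure_neuron:
  assumes m: "0 < m" and r: "r < m"
    and G: "(\<lambda>(\<alpha>, w, \<beta>). G \<alpha> w \<beta>) \<in> borel_measurable (borel \<Otimes>\<^sub>M (gauss_vec m d \<Otimes>\<^sub>M borel))"
  shows "(\<integral>\<^sup>+\<omega>. G (fst \<omega> r) (fst (snd \<omega>) r) (snd (snd \<omega>) r) \<partial>init_measure m d)
    = neuron_nn_integral m d G"
proof -
  define F where "F r' = (\<lambda>\<alpha> w \<beta>. if r' = r then G \<alpha> w \<beta> else 1)" for r'
  have "(\<integral>\<^sup>+\<omega>. G (fst \<omega> r) (fst (snd \<omega>) r) (snd (snd \<omega>) r) \<partial>init_measure m d)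
      = (\<integral>\<^sup>+\<omega>. (\<Prod>r'<m. F r' (fst \<omega> r') (fst (snd \<omega>) r') (snd (snd \<omega>) r')) \<partial>init_measure m d)"
    using r by (simp add: F_def)
  also have "\<dots> = (\<Prod>r'<m. neuron_nn_integral m d (F r'))"
  proof (intro nn_integral_init_measure_prod[OF m])
    show "(\<lambda>(\<alpha>, w, \<beta>). F r' \<alpha> w \<beta>) \<in> borel_measurable (borel \<Otimes>\<^sub>M (gauss_vec m d \<Otimes>\<^sub>M borel))" for r'
      using G by (cases "r' = r") (simp_all add: F_def)
  qed
  also have "\<dots> = (\<Prod>r'<m. if r' = r then neuron_nn_integral m d G else 1)"
    by (intro prod.cong) (simp_all add: F_def neuron_nn_integral_const[OF m])
  also have "\<dots> = neuron_nn_integral m d G"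
    using r by simp
  finally show ?thesis .
qed

lemma emeasure_neuron_sum_ge:
  assumes m: "0 < m" and "0 \<le> \<theta>"
    and h: "(\<lambda>(\<alpha>, w, \<beta>). h \<alpha> w \<beta>) \<in> borel_measurable (borel \<Otimes>\<^sub>M (gauss_vec m d \<Otimes>\<^sub>M borel))"
    and mgf: "neuron_nn_integral m d (\<lambda>\<alpha> w \<beta>. ennreal (exp (\<theta> * h \<alpha> w \<beta>))) \<le> ennreal (exp b)"
  shows "emeasure (init_measure m d)
      {\<omega> \<in> space (init_measure m d). t \<le> (\<Sum>r<m. h (fst \<omega> r) (fst (snd \<omega>) r) (snd (snd \<omega>) r))}
    \<le> ennreal (exp (real m * b - \<theta> * t))"
proof -
  define S where "S \<omega> = (\<Sum>r<m. h (fst \<omega> r) (fst (snd \<omega>) r) (snd (snd \<omega>) r))" for \<omega>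
  have h_neuron: "(\<lambda>\<omega>. h (fst \<omega> r) (fst (snd \<omega>) r) (snd (snd \<omega>) r)) \<in> borel_measurable (init_measure m d)"
    if "r \<in> {..<m}" for r
    using measurable_compose[OF measurable_neuron[of r m d] h] that by simp
  have h_exp: "(\<lambda>(\<alpha>, w, \<beta>). ennreal (exp (\<theta> * h \<alpha> w \<beta>)))
      \<in> borel_measurable (borel \<Otimes>\<^sub>M (gauss_vec m d \<Otimes>\<^sub>M borel))"
    using measurable_compose[OF h, of "\<lambda>v. ennreal (exp (\<theta> * v))" borel] by (simp add: split_beta')
  have "S \<in> borel_measurable (init_measure m d)"
    unfolding S_def using h_neuron by (rule borel_measurable_sum)
  then have "emeasure (init_measure m d) {\<omega> \<in> space (init_measure m d). t \<le> S \<omega>}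
      \<le> (\<integral>\<^sup>+\<omega>. ennreal (exp (\<theta> * (S \<omega> - t))) \<partial>init_measure m d)"
    using \<open>0 \<le> \<theta>\<close> by (intro emeasure_le_nn_integral) auto
  also have "\<dots> = (\<integral>\<^sup>+\<omega>. ennreal (exp (- \<theta> * t))
      * (\<Prod>r<m. ennreal (exp (\<theta> * h (fst \<omega> r) (fst (snd \<omega>) r) (snd (snd \<omega>) r)))) \<partial>init_measure m d)"
    by (simp add: S_def algebra_simps sum_distrib_left exp_diff exp_sum prod_ennreal
        ennreal_mult'[symmetric] divide_inverse exp_minus)
  also have "\<dots> = ennreal (exp (- \<theta> * t))
      * (\<Prod>r<m. neuron_nn_integral m d (\<lambda>\<alpha> w \<beta>. ennreal (exp (\<theta> * h \<alpha> w \<beta>))))"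
    using h_neuron h_exp
    by (subst nn_integral_cmult, measurable, subst nn_integral_init_measure_prod[OF m]) simp_all
  also have "\<dots> \<le> ennreal (exp (- \<theta> * t)) * (\<Prod>r<m. ennreal (exp b))"
    using mgf by (intro mult_left_mono prod_mono_ennreal) auto
  also have "\<dots> = ennreal (exp (real m * b - \<theta> * t))"
    by (simp add: ennreal_power ennreal_mult'[symmetric] exp_of_nat_mult[symmetric] mult_exp_exp)
  finally show ?thesis unfolding S_def .
qed

section \<open>Tail bounds at initialization\<close>

lemma emeasure_init_sign_neq:
  assumes m: "0 < m" and r: "r < m"
  shows "emeasure (init_measure m d) {\<omega> \<in> space (init_measure m d). \<bar>fst \<omega> r\<bar> \<noteq> real m powr (-1/3)} = 0"
proof -
  define G where "G \<alpha> (w :: nat \<Rightarrow> real) (\<beta> :: real) = (indicator {\<alpha>. \<bar>\<alpha>\<bar> \<noteq> real m powr (-1/3)} \<alpha> :: ennreal)"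
    for \<alpha> w \<beta>
  have "emeasure (init_measure m d) {\<omega> \<in> space (init_measure m d). \<bar>fst \<omega> r\<bar> \<noteq> real m powr (-1/3)}
      \<le> (\<integral>\<^sup>+\<omega>. G (fst \<omega> r) (fst (snd \<omega>) r) (snd (snd \<omega>) r) \<partial>init_measure m d)"
    by (rule emeasure_le_nn_integral) (auto simp: G_def)
  also have "\<dots> = neuron_nn_integral m d G"
    by (rule nn_integral_init_measure_neuron[OF m r]) (simp add: G_def)
  also have "\<dots> = 0"
    by (simp add: neuron_nn_integral_def G_def)
  finally show ?thesis by simp
qed

lemma emeasure_init_weight_ge:
  assumes m: "0 < m" and r: "r < m" and i: "i < d" and \<sigma>: "\<sigma>\<^sup>2 = 1"
  shows "emeasure (init_measure m d) {\<omega> \<in> space (init_measure m d). 1 \<le> \<sigma> * fst (snd \<omega>) r i}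
    \<le> ennreal (exp (- real m / 2))"
proof -
  define G where "G (\<alpha> :: real) (w :: nat \<Rightarrow> real) (\<beta> :: real) = ennreal (exp (real m * (\<sigma> * w i - 1)))"
    for \<alpha> w \<beta>
  have "emeasure (init_measure m d) {\<omega> \<in> space (init_measure m d). 1 \<le> \<sigma> * fst (snd \<omega>) r i}
      \<le> (\<integral>\<^sup>+\<omega>. G (fst \<omega> r) (fst (snd \<omega>) r) (snd (snd \<omega>) r) \<partial>init_measure m d)"
    by (rule emeasure_le_nn_integral) (auto simp: G_def)
  also have "\<dots> = neuron_nn_integral m d G"
    by (rule nn_integral_init_measure_neuron[OF m r]) (simp add: G_def)
  also have "\<dots> = (\<integral>\<^sup>+w. ennreal (exp (- real m)) * ennreal (exp ((real m * \<sigma>) * w i)) \<partial>gauss_vec m d)"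
    by (simp add: neuron_nn_integral_def G_def emeasure_gauss_m_UNIV[OF m] ennreal_mult'[symmetric]
        mult_exp_exp algebra_simps)
  also have "\<dots> = ennreal (exp (- real m)) * ennreal (exp ((real m * \<sigma>)\<^sup>2 / (2 * m)))"
    by (simp add: nn_integral_cmult nn_integral_exp_component_gauss_vec[OF m i])
  also have "(real m * \<sigma>)\<^sup>2 / (2 * m) = real m / 2"
    using m \<sigma> by (simp add: power_mult_distrib power2_eq_square)
  also have "ennreal (exp (- real m)) * ennreal (exp (real m / 2)) = ennreal (exp (- real m / 2))"
    by (simp add: ennreal_mult'[symmetric] mult_exp_exp)
  finally show ?thesis .
qed

lemma nn_integral_exp_preactivation:
  assumes m: "0 < m"
  shows "(\<integral>\<^sup>+w. \<integral>\<^sup>+\<beta>. ennreal (exp (c * (inner_d d w y + \<beta>))) \<partial>gauss_m m \<partial>gauss_vec m d)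
    = ennreal (exp (c\<^sup>2 * ((\<Sum>i<d. (y i)\<^sup>2) + 1) / (2 * m)))"
proof -
  have "(\<integral>\<^sup>+\<beta>. ennreal (exp (c * (q + \<beta>))) \<partial>gauss_m m)
      = ennreal (exp (c * q)) * ennreal (exp (c\<^sup>2 / (2 * m)))" for q
    by (simp add: distrib_left exp_add ennreal_mult' nn_integral_cmult measurable_gauss_m_iff
        nn_integral_exp_gauss_m[OF m])
  moreover have "c * inner_d d w y = (\<Sum>i<d. (c * y i) * w i)" for w
    by (simp add: inner_d_def sum_distrib_left ac_simps)
  ultimately have "(\<integral>\<^sup>+w. \<integral>\<^sup>+\<beta>. ennreal (exp (c * (inner_d d w y + \<beta>))) \<partial>gauss_m m \<partial>gauss_vec m d)
      = (\<integral>\<^sup>+w. ennreal (exp (\<Sum>i<d. (c * y i) * w i)) * ennreal (exp (c\<^sup>2 / (2 * m))) \<partial>gauss_vec m d)"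
    by (intro nn_integral_cong) simp
  also have "\<dots> = ennreal (exp (c\<^sup>2 / (2 * m))) * (\<integral>\<^sup>+w. ennreal (exp (\<Sum>i<d. (c * y i) * w i)) \<partial>gauss_vec m d)"
    by (subst nn_integral_multc) (measurable, simp add: mult.commute)
  also have "\<dots> = ennreal (exp (c\<^sup>2 / (2 * m))) * ennreal (exp (c\<^sup>2 * (\<Sum>i<d. (y i)\<^sup>2) / (2 * m)))"
    by (simp add: nn_integral_exp_sum_gauss_vec[OF m] power_mult_distrib sum_distrib_left)
  also have "\<dots> = ennreal (exp (c\<^sup>2 * ((\<Sum>i<d. (y i)\<^sup>2) + 1) / (2 * m)))"
    by (simp add: ennreal_mult'[symmetric] mult_exp_exp add_divide_distrib algebra_simps)
  finally show ?thesis .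
qed

lemma exp_relu_add_exp_neg_le: "exp (k * relu u) + exp (- (k * relu u)) \<le> exp (k * u) + exp (- (k * u))"
proof -
  have "\<bar>k * relu u\<bar> \<le> \<bar>k * u\<bar>"
    by (auto simp: relu_def abs_mult intro!: mult_left_mono)
  then have "cosh (k * relu u) \<le> cosh (k * u)"
    using cosh_real_nonneg_le_iff[of "\<bar>k * relu u\<bar>" "\<bar>k * u\<bar>"] by simp
  then show ?thesis by (simp add: cosh_def)
qed

text \<open>Since \<open>cosh\<close> is even and increasing on \<open>[0, \<infinity>)\<close>, the ReLU can be dropped and
  the moment generating function of the Gaussian preactivation takes over.\<close>
lemma neuron_nn_integral_exp_relu_le:
  assumes m: "0 < m"
  shows "neuron_nn_integral m d (\<lambda>\<alpha> w \<beta>. ennreal (exp (c * \<alpha> * relu (inner_d d w y + \<beta>))))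
    \<le> ennreal (exp ((c * real m powr (-1/3))\<^sup>2 * ((\<Sum>i<d. (y i)\<^sup>2) + 1) / (2 * m)))"
proof -
  interpret gauss: prob_space "gauss_m m" by (rule prob_space_gauss_m[OF m])
  define k where "k = c * real m powr (-1/3)"
  define E where "E k' = (\<lambda>w \<beta>. ennreal (exp (k' * (inner_d d w y + \<beta>))))" for k'
  have E_meas [measurable]: "(\<lambda>(w, \<beta>). E k' w \<beta>) \<in> borel_measurable (gauss_vec m d \<Otimes>\<^sub>M gauss_m m)" for k'
    unfolding E_def inner_d_def by measurable
  have "neuron_nn_integral m d (\<lambda>\<alpha> w \<beta>. ennreal (exp (c * \<alpha> * relu (inner_d d w y + \<beta>))))
      = (\<integral>\<^sup>+w. \<integral>\<^sup>+\<beta>. (ennreal (exp (k * relu (inner_d d w y + \<beta>)))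
          + ennreal (exp (- (k * relu (inner_d d w y + \<beta>))))) / 2 \<partial>gauss_m m \<partial>gauss_vec m d)"
    by (simp add: neuron_nn_integral_def k_def)
  also have "\<dots> \<le> (\<integral>\<^sup>+w. \<integral>\<^sup>+\<beta>. (E k w \<beta> + E (- k) w \<beta>) / 2 \<partial>gauss_m m \<partial>gauss_vec m d)"
    using exp_relu_add_exp_neg_le
    by (intro nn_integral_mono divide_right_mono_ennreal)
       (simp add: E_def ennreal_plus[symmetric] del: ennreal_plus)
  also have "\<dots> = (\<integral>\<^sup>+w. ((\<integral>\<^sup>+\<beta>. E k w \<beta> \<partial>gauss_m m) + (\<integral>\<^sup>+\<beta>. E (- k) w \<beta> \<partial>gauss_m m)) / 2 \<partial>gauss_vec m d)"
    by (intro nn_integral_cong) (simp add: nn_integral_divide nn_integral_add measurable_gauss_m_iff E_def)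
  also have "\<dots> = ((\<integral>\<^sup>+w. \<integral>\<^sup>+\<beta>. E k w \<beta> \<partial>gauss_m m \<partial>gauss_vec m d)
      + (\<integral>\<^sup>+w. \<integral>\<^sup>+\<beta>. E (- k) w \<beta> \<partial>gauss_m m \<partial>gauss_vec m d)) / 2"
    by (subst nn_integral_divide nn_integral_add; measurable)+
  also have "\<dots> = ennreal (exp (k\<^sup>2 * ((\<Sum>i<d. (y i)\<^sup>2) + 1) / (2 * m)))"
    unfolding E_def nn_integral_exp_preactivation[OF m] by simp
  finally show ?thesis unfolding k_def .
qed

lemma emeasure_init_output_ge:
  assumes m: "0 < m" and y: "(\<Sum>i<d. (y i)\<^sup>2) \<le> 4" and "0 \<le> t" and \<sigma>: "\<sigma>\<^sup>2 = 1"
  shows "emeasure (init_measure m d)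
      {\<omega> \<in> space (init_measure m d). t \<le> \<sigma> * fnet m d (fst \<omega>) (snd (snd \<omega>)) (fst (snd \<omega>)) y}
    \<le> ennreal (exp (- (t\<^sup>2 * real m powr (2/3)) / 10))"
proof -
  define s where "s = real m powr (-1/3)"
  define P where "P = real m powr (2/3)"
  define \<theta> where "\<theta> = t * P / 5" \<comment> \<open>minimizes the Chernoff exponent\<close>
  have sP: "s\<^sup>2 * P = 1"
    using m by (simp add: s_def P_def power2_eq_square powr_add[symmetric])
  have "neuron_nn_integral m d (\<lambda>\<alpha> w \<beta>. ennreal (exp (\<theta> * (\<sigma> * \<alpha> * relu (inner_d d w y + \<beta>)))))
      \<le> ennreal (exp ((\<theta> * \<sigma> * s)\<^sup>2 * ((\<Sum>i<d. (y i)\<^sup>2) + 1) / (2 * m)))"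
    using neuron_nn_integral_exp_relu_le[OF m, where c = "\<theta> * \<sigma>" and y = y] by (simp add: s_def ac_simps)
  also have "\<dots> \<le> ennreal (exp (5 * (\<theta> * s)\<^sup>2 / (2 * m)))"
  proof -
    have "(\<theta> * s)\<^sup>2 * ((\<Sum>i<d. (y i)\<^sup>2) + 1) \<le> (\<theta> * s)\<^sup>2 * 5"
      using y by (intro mult_left_mono) auto
    then show ?thesis
      using \<sigma> by (intro ennreal_leI) (simp add: power_mult_distrib divide_right_mono mult.commute)
  qed
  finally have "emeasure (init_measure m d)
      {\<omega> \<in> space (init_measure m d).
        t \<le> (\<Sum>r<m. \<sigma> * fst \<omega> r * relu (inner_d d (fst (snd \<omega>) r) y + snd (snd \<omega>) r))}
    \<le> ennreal (exp (real m * (5 * (\<theta> * s)\<^sup>2 / (2 * m)) - \<theta> * t))"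
    using \<open>0 \<le> t\<close> m by (intro emeasure_neuron_sum_ge) (auto simp: P_def \<theta>_def inner_d_def)
  also have "real m * (5 * (\<theta> * s)\<^sup>2 / (2 * m)) - \<theta> * t = - (t\<^sup>2 * P) / 10"
    using m sP by (simp add: \<theta>_def field_simps power2_eq_square)
  finally show ?thesis
    by (simp add: fnet_def sum_distrib_left P_def ac_simps)
qed

definition near_kink_count ::
    "nat \<Rightarrow> nat \<Rightarrow> (nat \<Rightarrow> nat \<Rightarrow> real) \<Rightarrow> (nat \<Rightarrow> real) \<Rightarrow> (nat \<Rightarrow> real) \<Rightarrow> real \<Rightarrow> nat" where
  "near_kink_count m d W b y \<delta> = card {r. r < m \<and> \<bar>inner_d d (W r) y + b r\<bar> \<le> \<delta>}"

lemma near_kink_count_eq_sum: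
  "real (near_kink_count m d W b y \<delta>) = (\<Sum>r<m. if \<bar>inner_d d (W r) y + b r\<bar> \<le> \<delta> then 1 else 0)"
  unfolding near_kink_count_def by (rule real_card_lessThan_filter)

lemma borel_measurable_init_near_kink_count [measurable]:
  "(\<lambda>\<omega>. real (near_kink_count m d (fst (snd \<omega>)) (snd (snd \<omega>)) y \<delta>)) \<in> borel_measurable (init_measure m d)"
  unfolding near_kink_count_eq_sum inner_d_def by measurable

lemma nn_integral_exp_near_kink_gauss_m_le:
  assumes m: "0 < m" and "0 \<le> \<delta>"
  shows "(\<integral>\<^sup>+\<beta>. ennreal (exp (if \<bar>q + \<beta>\<bar> \<le> \<delta> then 1 else 0)) \<partial>gauss_m m) \<le> ennreal (exp (2 * \<delta> * sqrt m))"
proof -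
  have "exp 1 \<le> (3 :: real)" using exp_le by simp
  then have "ennreal (exp (if \<bar>q + \<beta>\<bar> \<le> \<delta> then 1 else 0)) \<le> 1 + 2 * indicator {-q-\<delta>..-q+\<delta>} \<beta>" for \<beta>
    by (auto simp: indicator_def ennreal_leI[of _ 3, simplified])
  then have "(\<integral>\<^sup>+\<beta>. ennreal (exp (if \<bar>q + \<beta>\<bar> \<le> \<delta> then 1 else 0)) \<partial>gauss_m m)
      \<le> (\<integral>\<^sup>+\<beta>. 1 + 2 * indicator {-q-\<delta>..-q+\<delta>} \<beta> \<partial>gauss_m m)"
    by (intro nn_integral_mono)
  also have "\<dots> = 1 + 2 * emeasure (gauss_m m) {-q-\<delta>..-q+\<delta>}"
    by (subst nn_integral_add)
       (simp_all add: measurable_gauss_m_iff emeasure_gauss_m_UNIV[OF m] nn_integral_cmult_indicator)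
  also have "\<dots> \<le> 1 + 2 * ennreal (2 * \<delta> * sqrt m / 2)"
    using emeasure_gauss_m_interval_le[OF m, of "-q-\<delta>" "-q+\<delta>"] \<open>0 \<le> \<delta>\<close>
    by (intro add_left_mono mult_left_mono) auto
  also have "\<dots> = ennreal (1 + 2 * \<delta> * sqrt m)"
    using \<open>0 \<le> \<delta>\<close> by (simp add: ennreal_mult mult.assoc)
  also have "\<dots> \<le> ennreal (exp (2 * \<delta> * sqrt m))"
    by (intro ennreal_leI) (metis exp_ge_add_one_self)
  finally show ?thesis .
qed

lemma emeasure_near_kink_count_ge:
  assumes m: "0 < m" and "0 \<le> \<delta>"
  shows "emeasure (init_measure m d)
      {\<omega> \<in> space (init_measure m d). t \<le> real (near_kink_count m d (fst (snd \<omega>)) (snd (snd \<omega>)) y \<delta>)}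
    \<le> ennreal (exp (2 * \<delta> * real m * sqrt m - t))"
proof -
  interpret gauss_vec: prob_space "gauss_vec m d" by (rule prob_space_gauss_vec[OF m])
  have "neuron_nn_integral m d (\<lambda>\<alpha> w \<beta>. ennreal (exp (1 * (if \<bar>inner_d d w y + \<beta>\<bar> \<le> \<delta> then 1 else 0))))
      \<le> (\<integral>\<^sup>+w. ennreal (exp (2 * \<delta> * sqrt m)) \<partial>gauss_vec m d)"
    unfolding neuron_nn_integral_def
    by (intro nn_integral_mono) (simp add: nn_integral_exp_near_kink_gauss_m_le[OF m \<open>0 \<le> \<delta>\<close>])
  also have "\<dots> = ennreal (exp (2 * \<delta> * sqrt m))"
    by (simp add: gauss_vec.emeasure_space_1)
  finally have "emeasure (init_measure m d)
      {\<omega> \<in> space (init_measure m d).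
        t \<le> (\<Sum>r<m. if \<bar>inner_d d (fst (snd \<omega>) r) y + snd (snd \<omega>) r\<bar> \<le> \<delta> then 1 else 0)}
    \<le> ennreal (exp (real m * (2 * \<delta> * sqrt m) - 1 * t))"
    by (intro emeasure_neuron_sum_ge[OF m]) (auto simp: inner_d_def)
  then show ?thesis
    by (simp add: near_kink_count_eq_sum ac_simps)
qed

section \<open>Deterministic estimates\<close>

lemma abs_inner_d_le: "\<bar>inner_d d u v\<bar> \<le> norm_d d u * norm_d d v"
proof -
  have "\<bar>inner_d d u v\<bar> \<le> (\<Sum>i<d. \<bar>u i\<bar> * \<bar>v i\<bar>)"
    unfolding inner_d_def by (rule order_trans[OF sum_abs]) (simp add: abs_mult)
  also have "\<dots> \<le> L2_set u {..<d} * L2_set v {..<d}"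
    by (rule L2_set_mult_ineq)
  finally show ?thesis by (simp add: norm_d_def L2_set_def)
qed

lemma inner_d_diff: "inner_d d (\<lambda>i. u i - v i) x = inner_d d u x - inner_d d v x"
  by (simp add: inner_d_def sum_subtractf left_diff_distrib)

lemma abs_inner_d_sub_le:
  assumes "\<forall>i<d. \<bar>w i\<bar> \<le> 1" "\<forall>i<d. \<bar>x i - y i\<bar> \<le> e"
  shows "\<bar>inner_d d w x - inner_d d w y\<bar> \<le> real d * e"
proof -
  have "\<bar>inner_d d w x - inner_d d w y\<bar> = \<bar>\<Sum>i<d. w i * (x i - y i)\<bar>"
    by (simp add: inner_d_def sum_subtractf right_diff_distrib)
  also have "\<dots> \<le> (\<Sum>i<d. e)"
  proof (intro order_trans[OF sum_abs] sum_mono)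
    fix i assume "i \<in> {..<d}"
    then show "\<bar>w i * (x i - y i)\<bar> \<le> e"
      using mult_mono[of "\<bar>w i\<bar>" 1 "\<bar>x i - y i\<bar>" e] assms by (simp add: abs_mult)
  qed
  finally show ?thesis by simp
qed

lemma abs_inner_d_le_norm_2inf:
  assumes "r < m" "norm_d d x = 1"
  shows "\<bar>inner_d d (V r) x\<bar> \<le> norm_2inf m d V"
proof -
  have "\<bar>inner_d d (V r) x\<bar> \<le> norm_d d (V r)"
    using abs_inner_d_le[of d "V r" x] assms(2) by simp
  also have "\<dots> \<le> norm_2inf m d V"
    unfolding norm_2inf_def using assms(1) by (intro Max_ge) auto
  finally show ?thesis .
qed

lemma sum_sq_Xset: "x \<in> Xset d \<Longrightarrow> (\<Sum>i<d. (x i)\<^sup>2) = 1"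
  using sum_nonneg[of "{..<d}" "\<lambda>i. (x i)\<^sup>2"] by (simp add: Xset_def norm_d_def)

lemma abs_le_1_Xset:
  assumes "x \<in> Xset d" "i < d"
  shows "\<bar>x i\<bar> \<le> 1"
proof -
  have "(x i)\<^sup>2 \<le> (\<Sum>i<d. (x i)\<^sup>2)"
    using assms(2) by (intro member_le_sum) auto
  then show ?thesis
    using sum_sq_Xset[OF assms(1)] by (simp add: abs_square_le_1)
qed

text \<open>The constraint \<open>x\<^sub>d = 1/2\<close> is incompatible with \<open>\<parallel>x\<parallel> = 1\<close> in dimension one.\<close>
lemma two_le_dim_Xset:
  assumes "x \<in> Xset d"
  shows "2 \<le> d"
proof (rule ccontr)
  assume "\<not> 2 \<le> d"
  moreover have "d \<noteq> 0"
    using sum_sq_Xset[OF assms] by (cases "d = 0") auto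
  ultimately have "d = 1" by simp
  then have "(\<Sum>i<d. (x i)\<^sup>2) = (1/2)\<^sup>2"
    using assms by (simp add: Xset_def)
  then show False
    using sum_sq_Xset[OF assms] by (simp add: power2_eq_square)
qed

lemma sum_sq_le_of_close:
  assumes "\<forall>i<d. \<bar>x i - y i\<bar> \<le> e"
  shows "(\<Sum>i<d. (y i)\<^sup>2) \<le> 2 * (\<Sum>i<d. (x i)\<^sup>2) + 2 * real d * e\<^sup>2"
proof -
  have "(y i)\<^sup>2 \<le> 2 * (x i)\<^sup>2 + 2 * e\<^sup>2" if "i < d" for i
  proof -
    have "\<bar>y i\<bar> \<le> \<bar>x i\<bar> + e"
      using assms that by force
    then have "(y i)\<^sup>2 \<le> (\<bar>x i\<bar> + e)\<^sup>2"
      by (metis abs_ge_zero power2_abs power_mono)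
    also have "\<dots> \<le> 2 * (x i)\<^sup>2 + 2 * e\<^sup>2"
      using sum_squares_ge_zero[of "\<bar>x i\<bar> - e" 0] by (simp add: power2_eq_square algebra_simps)
    finally show ?thesis .
  qed
  then have "(\<Sum>i<d. (y i)\<^sup>2) \<le> (\<Sum>i<d. 2 * (x i)\<^sup>2 + 2 * e\<^sup>2)"
    by (intro sum_mono) auto
  then show ?thesis
    by (simp add: sum.distrib sum_distrib_left)
qed

definition gridpt :: "nat \<Rightarrow> nat \<Rightarrow> (nat \<Rightarrow> int) \<Rightarrow> nat \<Rightarrow> real" where
  "gridpt d m j = (\<lambda>i. if i < d then of_int (j i) / real (d * m) else 0)"

definition grid :: "nat \<Rightarrow> nat \<Rightarrow> (nat \<Rightarrow> real) set" where
  "grid d m = {y \<in> gridpt d m ` (PiE {..<d} (\<lambda>_. {- int (d * m)..int (d * m)})). (\<Sum>i<d. (y i)\<^sup>2) \<le> 4}"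

lemma finite_grid: "finite (grid d m)"
proof -
  have "grid d m \<subseteq> gridpt d m ` (PiE {..<d} (\<lambda>_. {- int (d * m)..int (d * m)}))"
    unfolding grid_def by blast
  then show ?thesis
    by (rule finite_subset) (intro finite_imageI finite_PiE; simp)
qed

lemma card_grid_le: "card (grid d m) \<le> (2 * d * m + 1) ^ d"
proof -
  have "card (grid d m) \<le> card (gridpt d m ` (PiE {..<d} (\<lambda>_. {- int (d * m)..int (d * m)})))"
    unfolding grid_def by (intro card_mono) (auto intro: finite_PiE)
  also have "\<dots> \<le> card (PiE {..<d} (\<lambda>_. {- int (d * m)..int (d * m)}))"
    by (rule card_image_le) (auto intro: finite_PiE)
  also have "\<dots> = (2 * d * m + 1) ^ d"
    by (simp add: card_PiE nat_add_distrib nat_mult_distrib mult.assoc)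
  finally show ?thesis .
qed

lemma Xset_near_grid:
  assumes x: "x \<in> Xset d" and m: "1 \<le> m"
  shows "\<exists>y \<in> grid d m. \<forall>i<d. \<bar>x i - y i\<bar> \<le> 1 / real (d * m)"
proof -
  define K where "K = real (d * m)"
  have "real d * 1 \<le> K"
    using m unfolding K_def by (simp only: of_nat_mult) (intro mult_left_mono, auto)
  moreover have "2 \<le> d"
    by (rule two_le_dim_Xset[OF x])
  ultimately have K: "2 \<le> K" "real d \<le> K" by auto
  define j where "j = restrict (\<lambda>i. \<lfloor>x i * K\<rfloor>) {..<d}"
  define y where "y = gridpt d m j"
  have "\<lfloor>x i * K\<rfloor> \<in> {- int (d * m)..int (d * m)}" if "i < d" for i
  proof -
    have "\<bar>x i * K\<bar> \<le> K"
      using abs_le_1_Xset[OF x that] K by (simp add: abs_mult mult_left_le_one_le)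
    then show ?thesis
      unfolding K_def by (auto simp: le_floor_iff floor_le_iff abs_le_iff)
  qed
  then have j: "j \<in> PiE {..<d} (\<lambda>_. {- int (d * m)..int (d * m)})"
    by (auto simp: j_def)
  have close: "\<forall>i<d. \<bar>x i - y i\<bar> \<le> 1 / K"
  proof (intro allI impI)
    fix i assume "i < d"
    have "x i - y i = (x i * K - of_int \<lfloor>x i * K\<rfloor>) / K"
      using \<open>i < d\<close> K by (simp add: y_def gridpt_def j_def K_def field_simps)
    moreover have "0 \<le> x i * K - of_int \<lfloor>x i * K\<rfloor>" "x i * K - of_int \<lfloor>x i * K\<rfloor> \<le> 1"
      by linarith+
    ultimately show "\<bar>x i - y i\<bar> \<le> 1 / K" using K by (simp add: divide_right_mono)
  qed
  have "(\<Sum>i<d. (y i)\<^sup>2) \<le> 2 + 2 * (real d / K\<^sup>2)"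
    using sum_sq_le_of_close[OF close] by (simp add: sum_sq_Xset[OF x] power_divide)
  also have "\<dots> \<le> 4"
    using K by (simp add: power2_eq_square field_simps mult_mono)
  finally have "y \<in> grid d m"
    using j unfolding grid_def y_def by auto
  with close show ?thesis unfolding K_def by auto
qed

text \<open>\<open>U\<close> and \<open>V\<close> are the preactivations of a neuron at \<open>x\<close> and at a nearby grid point,
  \<open>D\<close> the change of its preactivation at \<open>x\<close> caused by moving the weights.\<close>
lemma relu_linearization_error:
  assumes "\<bar>U - V\<bar> \<le> e" "\<bar>D\<bar> \<le> \<rho>" "e \<le> \<rho>"
  shows "\<bar>relu (U + D) - D * (if U \<ge> 0 then 1 else 0) - relu V\<bar> \<le> e + \<rho> * (if \<bar>V\<bar> \<le> 2 * \<rho> then 1 else 0)"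
  using assms unfolding relu_def by (auto simp: max_def abs_if split: if_splits)

lemma abs_sum_relu_linearization_error_le:
  assumes "0 < m" and a: "\<forall>r<m. \<bar>a r\<bar> = s" and UV: "\<forall>r<m. \<bar>U r - V r\<bar> \<le> 1 / real m"
    and D: "\<forall>r<m. \<bar>D r\<bar> \<le> \<rho>" and \<rho>: "1 / real m \<le> \<rho>"
  shows "\<bar>\<Sum>r<m. a r * (relu (U r + D r) - D r * (if U r \<ge> 0 then 1 else 0) - relu (V r))\<bar>
    \<le> s + s * \<rho> * real (card {r. r < m \<and> \<bar>V r\<bar> \<le> 2 * \<rho>})"
proof -
  have s: "0 \<le> s" using a \<open>0 < m\<close> by force
  have "\<bar>\<Sum>r<m. a r * (relu (U r + D r) - D r * (if U r \<ge> 0 then 1 else 0) - relu (V r))\<bar>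
      \<le> (\<Sum>r<m. s * (1 / real m + \<rho> * (if \<bar>V r\<bar> \<le> 2 * \<rho> then 1 else 0)))"
  proof (intro order_trans[OF sum_abs] sum_mono)
    fix r assume "r \<in> {..<m}"
    then have "\<bar>relu (U r + D r) - D r * (if U r \<ge> 0 then 1 else 0) - relu (V r)\<bar>
        \<le> 1 / real m + \<rho> * (if \<bar>V r\<bar> \<le> 2 * \<rho> then 1 else 0)"
      using UV D \<rho> by (intro relu_linearization_error) auto
    moreover have ar: "\<bar>a r\<bar> = s"
      using a \<open>r \<in> {..<m}\<close> by simp
    ultimately show "\<bar>a r * (relu (U r + D r) - D r * (if U r \<ge> 0 then 1 else 0) - relu (V r))\<bar>
        \<le> s * (1 / real m + \<rho> * (if \<bar>V r\<bar> \<le> 2 * \<rho> then 1 else 0))"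
      unfolding abs_mult ar using s by (intro mult_left_mono)
  qed
  also have "\<dots> = s + s * \<rho> * real (card {r. r < m \<and> \<bar>V r\<bar> \<le> 2 * \<rho>})"
    using \<open>0 < m\<close>
    by (simp add: real_card_lessThan_filter sum.distrib sum_distrib_left distrib_left mult.assoc)
  finally show ?thesis .
qed

lemma abs_fnet_sub_gnet_le:
  assumes "0 < m" and x: "x \<in> Xset d" and y: "\<forall>i<d. \<bar>x i - y i\<bar> \<le> 1 / real (d * m)"
    and a: "\<forall>r<m. \<bar>a r\<bar> = s" and W0: "\<forall>r<m. \<forall>i<d. \<bar>W0 r i\<bar> \<le> 1"
    and W: "norm_2inf m d (\<lambda>r i. W r i - W0 r i) \<le> \<rho>" and \<rho>: "1 / real m \<le> \<rho>"
  shows "\<bar>fnet m d a b W x - gnet m d a b W0 W x\<bar>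
    \<le> \<bar>fnet m d a b W0 y\<bar> + s + s * \<rho> * real (near_kink_count m d W0 b y (2 * \<rho>))"
proof -
  define U where "U r = inner_d d (W0 r) x + b r" for r
  define V where "V r = inner_d d (W0 r) y + b r" for r
  define D where "D r = inner_d d (\<lambda>i. W r i - W0 r i) x" for r
  have "2 \<le> d" by (rule two_le_dim_Xset[OF x])
  have UV: "\<bar>U r - V r\<bar> \<le> 1 / real m" if "r < m" for r
  proof -
    have "\<bar>U r - V r\<bar> = \<bar>inner_d d (W0 r) x - inner_d d (W0 r) y\<bar>"
      by (simp add: U_def V_def)
    also have "\<dots> \<le> real d * (1 / real (d * m))"
      using W0 y that by (intro abs_inner_d_sub_le) auto
    also have "\<dots> = 1 / real m"
      using \<open>2 \<le> d\<close> by simp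
    finally show ?thesis .
  qed
  have D: "\<bar>D r\<bar> \<le> \<rho>" if "r < m" for r
    using abs_inner_d_le_norm_2inf[OF that, of d x "\<lambda>r i. W r i - W0 r i"] W x
    by (simp add: D_def Xset_def)
  have "fnet m d a b W x - gnet m d a b W0 W x - fnet m d a b W0 y
      = (\<Sum>r<m. a r * (relu (U r + D r) - D r * (if U r \<ge> 0 then 1 else 0) - relu (V r)))"
    unfolding fnet_def gnet_def sum_subtractf[symmetric]
    by (intro sum.cong) (simp_all add: U_def V_def D_def inner_d_diff algebra_simps)
  moreover have "\<bar>\<dots>\<bar> \<le> s + s * \<rho> * real (near_kink_count m d W0 b y (2 * \<rho>))"
    using abs_sum_relu_linearization_error_le[OF \<open>0 < m\<close> a] UV D \<rho>
    by (simp add: near_kink_count_def V_def)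
  ultimately show ?thesis by linarith
qed

section \<open>The good event\<close>

definition good_init ::
    "nat \<Rightarrow> nat \<Rightarrow> real \<Rightarrow> ((nat \<Rightarrow> real) \<times> (nat \<Rightarrow> nat \<Rightarrow> real) \<times> (nat \<Rightarrow> real)) set" where
  "good_init m d R = {(a, W0, b) \<in> space (init_measure m d).
     (\<forall>r<m. \<bar>a r\<bar> = real m powr (-1/3)) \<and> (\<forall>r<m. \<forall>i<d. \<bar>W0 r i\<bar> < 1) \<and>
     (\<forall>y \<in> grid d m. \<bar>fnet m d a b W0 y\<bar> < 10 / real m powr (1/6)) \<and>
     (\<forall>y \<in> grid d m. real (near_kink_count m d W0 b y (2 * (R / real m powr (2/3))))
        < 5 * R * real m powr (5/6))}"

lemma good_init_sets: "good_init m d R \<in> sets (init_measure m d)"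
  unfolding good_init_def case_prod_beta prod.collapse
  using finite_grid by measurable

lemma measure_init_sign_neq:
  assumes "0 < m"
  shows "measure (init_measure m d)
    (\<Union>r\<in>{..<m}. {\<omega> \<in> space (init_measure m d). \<bar>fst \<omega> r\<bar> \<noteq> real m powr (-1/3)}) = 0"
proof -
  have "measure (init_measure m d)
      (\<Union>r\<in>{..<m}. {\<omega> \<in> space (init_measure m d). \<bar>fst \<omega> r\<bar> \<noteq> real m powr (-1/3)}) \<le> real m * 0"
    using emeasure_init_sign_neq[OF assms] by (intro measure_UNION_le_card[of "{..<m}", simplified])
      (auto simp: measure_def)
  then show ?thesis by (simp add: measure_le_0_iff)
qed

lemma measure_init_weight_ge_1:
  assumes "0 < m"
  shows "measure (init_measure m d)
      (\<Union>(r, i)\<in>{..<m} \<times> {..<d}. {\<omega> \<in> space (init_measure m d). 1 \<le> \<bar>fst (snd \<omega>) r i\<bar>})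
    \<le> 2 * real (m * d) * exp (- real m / 2)"
proof -
  have "measure (init_measure m d)
      (\<Union>(r, i)\<in>{..<m} \<times> {..<d}. {\<omega> \<in> space (init_measure m d). 1 \<le> \<bar>fst (snd \<omega>) r i\<bar>})
    \<le> real (card ({..<m} \<times> {..<d})) * (2 * exp (- real m / 2))"
    unfolding split_beta
    by (intro measure_UNION_le_card measure_abs_ge_le emeasure_init_weight_ge[OF assms]) auto
  then show ?thesis by (simp add: card_cartesian_product)
qed

lemma measure_init_output_grid_ge:
  assumes m: "0 < m"
  shows "measure (init_measure m d) (\<Union>y\<in>grid d m. {\<omega> \<in> space (init_measure m d).
      10 / real m powr (1/6) \<le> \<bar>fnet m d (fst \<omega>) (snd (snd \<omega>)) (fst (snd \<omega>)) y\<bar>})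
    \<le> real (card (grid d m)) * (2 * exp (- 10 * real m powr (1/3)))"
proof -
  define z where "z = real m powr (1/12)"
  have "0 < z" using m by (simp add: z_def)
  have "- ((10 / real m powr (1/6))\<^sup>2 * real m powr (2/3)) / 10 = - 10 * real m powr (1/3)"
    using powr_twelfths[of "real m"] m \<open>0 < z\<close> unfolding z_def[symmetric]
    by (simp add: power_divide field_simps flip: power_mult power_add)
  then show ?thesis
    using emeasure_init_output_ge[OF m, where t = "10 / real m powr (1/6)"] finite_grid
    by (intro measure_UNION_le_card measure_abs_ge_le) (auto simp: grid_def)
qed

lemma measure_init_near_kink_grid_ge:
  assumes m: "0 < m" and R: "1 \<le> R"
  shows "measure (init_measure m d) (\<Union>y\<in>grid d m. {\<omega> \<in> space (init_measure m d).
      5 * R * real m powr (5/6)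
        \<le> real (near_kink_count m d (fst (snd \<omega>)) (snd (snd \<omega>)) y (2 * (R / real m powr (2/3))))})
    \<le> real (card (grid d m)) * exp (- (real m powr (5/6)))"
proof -
  define z where "z = real m powr (1/12)"
  have "0 < z" using m by (simp add: z_def)
  have z: "real m powr (2/3) = z ^ 8" "real m powr (5/6) = z ^ 10" "sqrt (real m) = z ^ 6"
    and z_m: "real m = z ^ 12"
    using powr_twelfths[of "real m"] m unfolding z_def by simp_all
  have "2 * (2 * (R / real m powr (2/3))) * real m * sqrt (real m) - 5 * R * real m powr (5/6)
      = - R * z ^ 10"
    using \<open>0 < z\<close> unfolding z unfolding z_m by (simp add: field_simps flip: power_add)
  also have "\<dots> \<le> - (real m powr (5/6))"
    using R \<open>0 < z\<close> unfolding z by simp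
  finally have exponent:
    "2 * (2 * (R / real m powr (2/3))) * real m * sqrt (real m) - 5 * R * real m powr (5/6)
      \<le> - (real m powr (5/6))" .
  have "emeasure (init_measure m d) {\<omega> \<in> space (init_measure m d). 5 * R * real m powr (5/6)
      \<le> real (near_kink_count m d (fst (snd \<omega>)) (snd (snd \<omega>)) y (2 * (R / real m powr (2/3))))}
    \<le> ennreal (exp (- (real m powr (5/6))))" for y
  proof -
    have "emeasure (init_measure m d) {\<omega> \<in> space (init_measure m d). 5 * R * real m powr (5/6)
        \<le> real (near_kink_count m d (fst (snd \<omega>)) (snd (snd \<omega>)) y (2 * (R / real m powr (2/3))))}
      \<le> ennreal (exp (2 * (2 * (R / real m powr (2/3))) * real m * sqrt (real m)
          - 5 * R * real m powr (5/6)))"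
      using R by (intro emeasure_near_kink_count_ge[OF m]) auto
    also have "\<dots> \<le> ennreal (exp (- (real m powr (5/6))))"
      using exponent by (intro ennreal_leI) simp
    finally show ?thesis .
  qed
  then show ?thesis
    using finite_grid by (intro measure_UNION_le_card) (auto simp: measure_def enn2real_leI)
qed

lemma measure_not_good_init_le:
  assumes m: "1 \<le> m" and R: "1 \<le> R"
  shows "measure (init_measure m d) (space (init_measure m d) - good_init m d R)
    \<le> 2 * real (m * d) * exp (- real m / 2)
      + real (card (grid d m)) * (2 * exp (- 10 * real m powr (1/3)) + exp (- (real m powr (5/6))))"
proof -
  define M where "M = init_measure m d"
  have m0: "0 < m" using m by simp
  interpret prob_space M unfolding M_def by (rule prob_space_init_measure[OF m0])
  define BA where "BA = (\<Union>r\<in>{..<m}. {\<omega> \<in> space M. \<bar>fst \<omega> r\<bar> \<noteq> real m powr (-1/3)})"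
  define BW where "BW = (\<Union>(r, i)\<in>{..<m} \<times> {..<d}. {\<omega> \<in> space M. 1 \<le> \<bar>fst (snd \<omega>) r i\<bar>})"
  define BT where "BT = (\<Union>y\<in>grid d m. {\<omega> \<in> space M.
    10 / real m powr (1/6) \<le> \<bar>fnet m d (fst \<omega>) (snd (snd \<omega>)) (fst (snd \<omega>)) y\<bar>})"
  define BN where "BN = (\<Union>y\<in>grid d m. {\<omega> \<in> space M. 5 * R * real m powr (5/6)
    \<le> real (near_kink_count m d (fst (snd \<omega>)) (snd (snd \<omega>)) y (2 * (R / real m powr (2/3))))})"
  have sets: "BA \<in> sets M" "BW \<in> sets M" "BT \<in> sets M" "BN \<in> sets M"
    unfolding BA_def BW_def BT_def BN_def M_def
    by (intro sets.finite_UN finite_grid; auto simp: split_beta)+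
  have "space M - good_init m d R \<subseteq> BA \<union> BW \<union> BT \<union> BN"
    unfolding good_init_def M_def[symmetric] BA_def BW_def BT_def BN_def
    by (auto simp: not_less)
  then have "measure M (space M - good_init m d R) \<le> measure M (BA \<union> BW \<union> BT \<union> BN)"
    using sets by (intro finite_measure_mono) auto
  also have "\<dots> \<le> measure M BA + measure M BW + measure M BT + measure M BN"
    using measure_Un_le[of "BA \<union> BW \<union> BT" M BN] measure_Un_le[of "BA \<union> BW" M BT]
      measure_Un_le[of BA M BW] sets by auto
  finally show ?thesis
    using measure_init_sign_neq[OF m0, of d] measure_init_weight_ge_1[OF m0, of d]
      measure_init_output_grid_ge[OF m0, of d] measure_init_near_kink_grid_ge[OF m0 R, of d]
    unfolding M_def BA_def BW_def BT_def BN_def by (simp add: algebra_simps)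
qed

lemma exp_neg_half_power_12_le:
  fixes z D :: real
  assumes z: "2 \<le> z" and D: "0 \<le> D" "D \<le> z"
  shows "2 * z ^ 12 * D * exp (- (z ^ 12) / 2) \<le> exp (- (z ^ 4)) / 2"
proof -
  have z12: "z ^ 12 = z ^ 8 * z ^ 4" by (subst power_add[symmetric]) simp
  have z13: "z ^ 13 = z ^ 12 * z" by (simp add: power_Suc2[symmetric] numeral_eq_Suc)
  have "z ^ 12 * D \<le> z ^ 13"
    unfolding z13 using D z by (intro mult_left_mono) auto
  also have "\<dots> \<le> exp (13 * z)"
    using power_le_exp_mult[of z 13] z by simp
  finally have "4 * z ^ 12 * D * exp (- (z ^ 12) / 2) \<le> 4 * exp (13 * z) * exp (- (z ^ 12) / 2)"
    by simp
  also have "\<dots> = exp (ln 4 + 13 * z + - (z ^ 12) / 2)"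
    by (simp only: exp_add exp_ln)
  also have "\<dots> \<le> exp (- (z ^ 4))"
  proof -
    have "ln 4 \<le> (3 :: real)"
      using ln_le_minus_one[of 4] by simp
    moreover have "256 * z ^ 4 \<le> z ^ 12"
      unfolding z12 using power_mono[OF z, of 8] by (intro mult_right_mono) auto
    moreover have "z \<le> z ^ 4" "16 \<le> z ^ 4"
      using power_increasing[of 1 4 z] power_mono[OF z, of 4] z by auto
    ultimately show ?thesis by simp
  qed
  finally show ?thesis by simp
qed

lemma power_le_exp_15_square:
  fixes z :: real
  assumes z: "2 \<le> z" and d: "real d \<le> z"
  shows "(2 * real d * z ^ 12 + 1) ^ d \<le> exp (15 * z\<^sup>2)"
proof -
  have z13: "z ^ 13 = z ^ 12 * z" by (simp add: power_Suc2[symmetric] numeral_eq_Suc)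
  have z15: "z ^ 15 = z ^ 2 * z ^ 13" by (subst power_add[symmetric]) simp
  have "real d * z ^ 12 \<le> z ^ 12 * z"
    using d z by (simp add: mult.commute mult_left_mono)
  then have "2 * real d * z ^ 12 + 1 \<le> 3 * z ^ 13"
    using one_le_power[of z 13] z unfolding z13 by linarith
  also have "\<dots> \<le> z ^ 15"
    unfolding z15 using power_mono[OF z, of 2] z by (intro mult_right_mono) auto
  also have "\<dots> \<le> exp (15 * z)"
    using power_le_exp_mult[of z 15] z by simp
  finally have "(2 * real d * z ^ 12 + 1) ^ d \<le> exp (15 * z) ^ d"
    by (intro power_mono) auto
  also have "\<dots> \<le> exp (15 * z\<^sup>2)"
    using d z by (simp add: exp_of_nat_mult[symmetric] power2_eq_square mult_right_mono)
  finally show ?thesis .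
qed

lemma power_mult_exp_neg_le:
  fixes z :: real
  assumes z: "2 \<le> z" and d: "real d \<le> z"
  shows "(2 * real d * z ^ 12 + 1) ^ d * (2 * exp (- 10 * z ^ 4) + exp (- (z ^ 10))) \<le> exp (- (z ^ 4)) / 2"
proof -
  have z4: "z ^ 4 = z ^ 2 * z ^ 2" by (subst power_add[symmetric]) simp
  have z10: "z ^ 10 = z ^ 6 * z ^ 4" by (subst power_add[symmetric]) simp
  have z2: "4 \<le> z ^ 2"
    using power_mono[OF z, of 2] by simp
  have "64 \<le> z ^ 6"
    using power_mono[OF z, of 6] by simp
  have "4 * z ^ 2 \<le> z ^ 4"
    unfolding z4 using z2 by (rule mult_right_mono) simp
  moreover have "64 * z ^ 4 \<le> z ^ 10"
    unfolding z10 using \<open>64 \<le> z ^ 6\<close> by (rule mult_right_mono) simp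
  ultimately have z_pow: "4 * z ^ 2 \<le> z ^ 4" "10 * z ^ 4 \<le> z ^ 10"
    using zero_le_power[of z 4] z by linarith+
  have "(2 * real d * z ^ 12 + 1) ^ d * (2 * exp (- 10 * z ^ 4) + exp (- (z ^ 10)))
      \<le> exp (15 * z ^ 2) * (3 * exp (- 10 * z ^ 4))"
    using z_pow power_le_exp_15_square[OF z d] by (intro mult_mono) auto
  also have "\<dots> \<le> exp (15 * z ^ 2) * (exp 2 * exp (- 10 * z ^ 4))"
    using ln_le_minus_one[of 3] exp_le_cancel_iff[of "ln 3" 2]
    by (intro mult_left_mono mult_right_mono) auto
  also have "\<dots> = exp (2 + 15 * z ^ 2 - 10 * z ^ 4)"
    by (simp add: exp_add[symmetric] exp_diff algebra_simps)
  also have "\<dots> \<le> exp (- (z ^ 4) - 2)"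
    using z_pow z2 by simp
  also have "\<dots> = exp (- (z ^ 4)) / exp 2"
    by (simp add: exp_diff)
  also have "\<dots> \<le> exp (- (z ^ 4)) / 2"
    using exp_ge_add_one_self[of 2] by (intro divide_left_mono) auto
  finally show ?thesis .
qed

lemma prob_good_init_ge:
  assumes d: "2 \<le> d" and R: "1 \<le> R" and m: "real d ^ 12 \<le> real m"
  shows "1 - exp (- (real m powr (1/3))) \<le> measure (init_measure m d) (good_init m d R)"
proof -
  define z where "z = real m powr (1/12)"
  have "1 \<le> real d ^ 12"
    using d by (intro one_le_power) auto
  then have "1 \<le> real m" using m by linarith
  then have m1: "1 \<le> m" by simp
  have z: "real m powr (1/3) = z ^ 4" "real m powr (5/6) = z ^ 10" and z_m: "real m = z ^ 12"
    using powr_twelfths[of "real m"] m1 unfolding z_def by simp_all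
  have "real d \<le> z"
    using m power_mono_iff[of "real d" z 12] unfolding z_m by (simp add: z_def)
  interpret prob_space "init_measure m d" by (rule prob_space_init_measure) (use m1 in simp)
  have "measure (init_measure m d) (space (init_measure m d) - good_init m d R)
      \<le> 2 * real (m * d) * exp (- real m / 2)
        + real (card (grid d m)) * (2 * exp (- 10 * real m powr (1/3)) + exp (- (real m powr (5/6))))"
    by (rule measure_not_good_init_le[OF m1 R])
  also have "\<dots> \<le> 2 * z ^ 12 * real d * exp (- (z ^ 12) / 2)
      + (2 * real d * z ^ 12 + 1) ^ d * (2 * exp (- 10 * z ^ 4) + exp (- (z ^ 10)))"
  proof (rule add_mono)
    show "2 * real (m * d) * exp (- real m / 2) \<le> 2 * z ^ 12 * real d * exp (- (z ^ 12) / 2)"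
      by (simp add: z_m)
    have "real (card (grid d m)) \<le> real ((2 * d * m + 1) ^ d)"
      by (simp only: of_nat_le_iff card_grid_le)
    also have "\<dots> = (2 * real d * z ^ 12 + 1) ^ d"
      by (simp add: z_m add.commute)
    finally show "real (card (grid d m))
          * (2 * exp (- 10 * real m powr (1/3)) + exp (- (real m powr (5/6))))
        \<le> (2 * real d * z ^ 12 + 1) ^ d * (2 * exp (- 10 * z ^ 4) + exp (- (z ^ 10)))"
      unfolding z by (rule mult_right_mono) simp
  qed
  also have "\<dots> \<le> exp (- (z ^ 4))"
    using exp_neg_half_power_12_le[of z "real d"] power_mult_exp_neg_le[of z d] \<open>real d \<le> z\<close> d
    by simp
  finally show ?thesis
    unfolding z using prob_compl[OF good_init_sets] by simp
qed

lemma abs_fnet_sub_gnet_le_of_good_init: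
  assumes m: "1 \<le> m" and R: "1 \<le> R" and good: "(a, W0, b) \<in> good_init m d R" and x: "x \<in> Xset d"
    and W: "norm_2inf m d (\<lambda>r i. W r i - W0 r i) \<le> R / real m powr (2/3)"
  shows "\<bar>fnet m d a b W x - gnet m d a b W0 W x\<bar> \<le> 16 * R\<^sup>2 / real m powr (1/6)"
proof -
  define z where "z = real m powr (1/12)"
  have z: "real m powr (1/6) = z ^ 2" "real m powr (2/3) = z ^ 8" "real m powr (5/6) = z ^ 10"
    "real m powr (-1/3) = 1 / z ^ 4" and z_m: "real m = z ^ 12"
    using powr_twelfths[of "real m"] m unfolding z_def by simp_all
  have "1 \<le> z" using m by (simp add: z_def ge_one_powr_ge_zero)
  obtain y where y: "y \<in> grid d m" and xy: "\<forall>i<d. \<bar>x i - y i\<bar> \<le> 1 / real (d * m)"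
    using Xset_near_grid[OF x m] by blast
  have "1 / real m \<le> R / real m powr (2/3)"
    unfolding z unfolding z_m using R \<open>1 \<le> z\<close>
    by (intro frac_le) (auto simp: power_increasing)
  then have "\<bar>fnet m d a b W x - gnet m d a b W0 W x\<bar>
      \<le> \<bar>fnet m d a b W0 y\<bar> + real m powr (-1/3)
        + real m powr (-1/3) * (R / real m powr (2/3))
          * real (near_kink_count m d W0 b y (2 * (R / real m powr (2/3))))"
    using good m x xy W unfolding good_init_def
    by (intro abs_fnet_sub_gnet_le) (auto simp: less_imp_le)
  also have "\<dots> \<le> 10 / z ^ 2 + 1 / z ^ 4 + 1 / z ^ 4 * (R / z ^ 8) * (5 * R * z ^ 10)"
    using good y \<open>1 \<le> z\<close> R unfolding good_init_def z
    by (intro add_mono mult_left_mono less_imp_le) auto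
  also have "\<dots> \<le> 16 * R\<^sup>2 / z ^ 2"
  proof -
    have "1 / z ^ 4 \<le> R\<^sup>2 / z ^ 2" "10 / z ^ 2 \<le> 10 * R\<^sup>2 / z ^ 2"
      using R \<open>1 \<le> z\<close> by (auto intro!: frac_le simp: power_increasing one_le_power)
    moreover have "1 / z ^ 4 * (R / z ^ 8) * (5 * R * z ^ 10) = 5 * R\<^sup>2 / z ^ 2"
      using \<open>1 \<le> z\<close> by (simp add: field_simps power2_eq_square[of R] flip: power_add)
    ultimately show ?thesis by (simp add: field_simps)
  qed
  finally show ?thesis unfolding z .
qed

theorem theorem2:
  shows "\<exists>C>0. \<exists>c>0. \<exists>k::nat. \<forall>(d::nat) (R::real) (m::nat).
     R \<ge> 1 \<and> m \<ge> 1 \<and> real m \<ge> C * real d ^ k \<longrightarrow>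
     (\<exists>E \<in> sets (init_measure m d).
        measure (init_measure m d) E \<ge> 1 - exp (- c * real m powr (1/3)) \<and>
        (\<forall>(a0, W0, b0) \<in> E. \<forall>W :: nat \<Rightarrow> nat \<Rightarrow> real.
           norm_2inf m d (\<lambda>r i. W r i - W0 r i) \<le> R / real m powr (2/3) \<longrightarrow>
           (\<forall>x \<in> Xset d.
              \<bar>fnet m d a0 b0 W x - gnet m d a0 b0 W0 W x\<bar>
                \<le> C * R\<^sup>2 / real m powr (1/6))))"
proof -
  have "\<exists>E \<in> sets (init_measure m d).
      measure (init_measure m d) E \<ge> 1 - exp (- 1 * real m powr (1/3)) \<and>
      (\<forall>(a0, W0, b0) \<in> E. \<forall>W. norm_2inf m d (\<lambda>r i. W r i - W0 r i) \<le> R / real m powr (2/3) \<longrightarrow>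
        (\<forall>x \<in> Xset d. \<bar>fnet m d a0 b0 W x - gnet m d a0 b0 W0 W x\<bar> \<le> 16 * R\<^sup>2 / real m powr (1/6)))"
    if R: "1 \<le> R" and m: "1 \<le> m" and md: "16 * real d ^ 12 \<le> real m" for d R m
  proof (cases "2 \<le> d")
    case True
    have "real d ^ 12 \<le> real m" using md zero_le_power[of "real d" 12] by linarith
    then show ?thesis
      using good_init_sets prob_good_init_ge[OF True R] abs_fnet_sub_gnet_le_of_good_init[OF m R]
      by (intro bexI[of _ "good_init m d R"]) auto
  next
    case False
    then have "Xset d = {}" using two_le_dim_Xset by blast
    interpret prob_space "init_measure m d" by (rule prob_space_init_measure) (use m in simp)
    show ?thesis by (intro bexI[of _ "space (init_measure m d)"]) (simp_all add: \<open>Xset d = {}\<close> prob_space)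
  qed
  note bound = this
  show ?thesis
    by (rule exI[of _ 16], rule conjI, simp, rule exI[of _ 1], rule conjI, simp, rule exI[of _ 12])
       (use bound in auto)
qed

end
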